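(* Let $I\subset[0,\infty)$ be an interval, let $a,b\in I^\circ$ with $a<b$, and let $f:I\to\mathbb{R}$ be twice differentiable on $I^\circ$ with $f''\in L^1([a,b])$. Let $q\ge 1$ and assume $|f''|^q$ is $h$-convex on $[a,b]$. Then, writing $M=\big|f''\big(\frac{a+b}{2}\big)\big|^q$, $$\left|\frac{f(a)+f(b)}{2}-\frac{1}{b-a}\int_a^b f(x)\,dx\right|\le \frac{(b-a)^2}{16}\Big(\frac23\Big)^{1-\frac1q}\left[\Big(\int_0^1\big\{(1-t^2)|f''(a)|^q+t(2-t)M\big\}h(t)\,dt\Big)^{1/q}+\Big(\int_0^1\big\{(1-t^2)|f''(b)|^q+t(2-t)M\big\}h(t)\,dt\Big)^{1/q}\right].$$
   Context: Let $J$ be an interval with $(0,1)\subseteq J$ and $h:J\to\mathbb{R}$ a non-negative function, not identically zero, which is Lebesgue integrable on $(0,1)$. A non-negative function $g$ defined on an interval $K$ is called $h$-convex on $K$ if for all $x,y\in K$ and all $t\in(0,1)$: $g(tx+(1-t)y)\le h(t)g(x)+h(1-t)g(y)$. $I^\circ$ denotes the interior of $I$. *)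

theory Defs
  imports "HOL-Analysis.Analysis"
begin

definition h_convex :: "(real \<Rightarrow> real) \<Rightarrow> real set \<Rightarrow> (real \<Rightarrow> real) \<Rightarrow> bool" where
  "h_convex h K g \<longleftrightarrow>
     (\<forall>x\<in>K. 0 \<le> g x) \<and>
     (\<forall>x\<in>K. \<forall>y\<in>K. \<forall>t\<in>{0<..<1}.
        g (t * x + (1 - t) * y) \<le> h t * g x + h (1 - t) * g y)"

end

theory Submission
  imports Defs
begin

text \<open>Integrating by parts twice, the trapezoid error equals
  \<open>1/(2(b - a)) \<integral>\<^sub>a\<^sup>b (x - a)(b - x) f''(x) dx\<close>. Split \<open>[a, b]\<close> at the midpoint \<open>c\<close> and
  substitute \<open>x = e + s(c - e)\<close> on the half with endpoint \<open>e\<close>: the kernel becomes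
  \<open>((b - a)/2)\<^sup>2 s(2 - s)\<close>. The power mean inequality for the weight \<open>s(2 - s)\<close>, of mass \<open>2/3\<close>,
  leaves \<open>\<integral>\<^sub>0\<^sup>1 s(2 - s)|f''|\<^sup>q\<close>, which \<open>h\<close>-convexity bounds by
  \<open>\<integral>\<^sub>0\<^sup>1 s(2 - s)(h(s)|f''(c)|\<^sup>q + h(1 - s)|f''(e)|\<^sup>q)\<close>; the substitution \<open>t = 1 - s\<close> in the
  second term yields the integrals of the statement.\<close>

lemma weighted_power_mean_integral_le_bound:
  fixes K g B :: "real \<Rightarrow> real" and S :: "real set"
  assumes q: "1 \<le> q"
    and K_nonneg: "\<forall>x\<in>S. 0 \<le> K x" and g_nonneg: "\<forall>x\<in>S. 0 \<le> g x"
    and Kg_int: "(\<lambda>x. K x * g x) integrable_on S"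
    and K_int: "(K has_integral \<kappa>) S" and \<kappa>_pos: "0 < \<kappa>"
    and B_int: "(B has_integral \<beta>) S"
    and bound: "\<forall>x\<in>S. K x * g x powr q \<le> B x"
    and \<beta>'_pos: "0 < \<beta>'" and \<beta>_le: "\<beta> \<le> \<beta>'"
  shows "integral S (\<lambda>x. K x * g x) \<le> \<kappa> powr (1 - 1/q) * \<beta>' powr (1/q)"
proof -
  define C where "C = \<kappa> powr (1 - 1/q) * \<beta>' powr (1/q)"
  define R where "R = (\<lambda>x. C * ((1/q) * B x / \<beta>' + (1 - 1/q) * K x / \<kappa>))"
  have C_pos: "0 < C" using \<kappa>_pos \<beta>'_pos by (simp add: C_def)
  have q_conj: "0 \<le> 1 - 1/q" "0 < 1/q" using q by (auto simp: field_simps)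
  have pointwise: "K x * g x \<le> R x" if x: "x \<in> S" for x
  proof (cases "K x = 0 \<or> g x = 0")
    case True
    have "0 \<le> B x"
      using bound K_nonneg g_nonneg x by (meson mult_nonneg_nonneg order_trans powr_ge_zero)
    then have "0 \<le> R x"
      using q_conj \<beta>'_pos \<kappa>_pos K_nonneg x C_pos unfolding R_def by simp
    then show ?thesis using True by auto
  next
    case False
    then have K_pos: "0 < K x" and g_pos: "0 < g x" using K_nonneg g_nonneg x by force+
    have "(g x powr q / \<beta>') powr (1/q) * (1/\<kappa>) powr (1 - 1/q)
       \<le> (1/q) * (g x powr q / \<beta>') + (1 - 1/q) * (1/\<kappa>)"
      using q_conj g_pos \<beta>'_pos \<kappa>_pos by (intro Youngs_inequality_0) auto
    also have "(g x powr q / \<beta>') powr (1/q) * (1/\<kappa>) powr (1 - 1/q) = g x / C"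
      using g_pos \<beta>'_pos \<kappa>_pos q by (simp add: C_def powr_divide powr_powr)
    finally have "g x \<le> C * ((1/q) * (g x powr q / \<beta>') + (1 - 1/q) * (1/\<kappa>))"
      using C_pos by (simp add: divide_le_eq mult.commute)
    then have "K x * g x \<le> C * ((1/q) * (K x * g x powr q) / \<beta>' + (1 - 1/q) * K x / \<kappa>)"
      using K_pos by (auto dest: mult_left_mono[of _ _ "K x"] simp: field_simps)
    also have "\<dots> \<le> R x"
      unfolding R_def using bound x C_pos q_conj \<beta>'_pos
      by (intro mult_left_mono add_right_mono divide_right_mono) auto
    finally show ?thesis .
  qed
  have R_int: "(R has_integral C * ((1/q) * \<beta> / \<beta>' + (1 - 1/q) * \<kappa> / \<kappa>)) S"
    unfolding R_def by (intro has_integral_mult_right has_integral_add has_integral_divide B_int K_int)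
  have "integral S (\<lambda>x. K x * g x) \<le> C * ((1/q) * \<beta> / \<beta>' + (1 - 1/q) * \<kappa> / \<kappa>)"
    using integral_le[OF Kg_int has_integral_integrable[OF R_int]] pointwise integral_unique[OF R_int]
    by auto
  also have "\<dots> \<le> C"
  proof -
    have "\<beta> / \<beta>' \<le> 1" using \<beta>_le \<beta>'_pos by simp
    then have "(1/q) * (\<beta> / \<beta>') \<le> 1/q"
      using q_conj mult_left_mono[of "\<beta> / \<beta>'" 1 "1/q"] by simp
    then show ?thesis using \<kappa>_pos C_pos by (simp add: mult_le_cancel_left1)
  qed
  finally show ?thesis by (simp add: C_def)
qed

lemma weighted_power_mean_integral_le:
  fixes K g B :: "real \<Rightarrow> real" and S :: "real set"
  assumes q: "1 \<le> q"
    and K_nonneg: "\<forall>x\<in>S. 0 \<le> K x" and g_nonneg: "\<forall>x\<in>S. 0 \<le> g x"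
    and Kg_int: "(\<lambda>x. K x * g x) integrable_on S"
    and K_int: "(K has_integral \<kappa>) S" and \<kappa>_pos: "0 < \<kappa>"
    and B_int: "(B has_integral \<beta>) S"
    and bound: "\<forall>x\<in>S. K x * g x powr q \<le> B x"
  shows "integral S (\<lambda>x. K x * g x) \<le> \<kappa> powr (1 - 1/q) * \<beta> powr (1/q)"
proof -
  have "\<forall>x\<in>S. 0 \<le> B x"
    using bound K_nonneg g_nonneg by (meson mult_nonneg_nonneg order_trans powr_ge_zero)
  then have "0 \<le> \<beta>" using has_integral_nonneg[OF B_int] by blast
  note bound_by = weighted_power_mean_integral_le_bound[OF assms]
  show ?thesis
  proof (cases "\<beta> = 0")
    case False
    with \<open>0 \<le> \<beta>\<close> show ?thesis by (intro bound_by) auto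
  next
    case True
    define X where "X = integral S (\<lambda>x. K x * g x)"
    define c where "c = \<kappa> powr (1 - 1/q)"
    have c_pos: "0 < c" using \<kappa>_pos by (simp add: c_def)
    have "X \<le> 0"
    proof (rule ccontr)
      assume "\<not> X \<le> 0"
      then have X_pos: "0 < X" by simp
      \<comment> \<open>apply the bound with \<open>\<beta>'\<close> chosen so that its right-hand side is \<open>X/2\<close>\<close>
      have "X \<le> c * ((X / (2*c)) powr q) powr (1/q)"
        using bound_by[of "(X / (2*c)) powr q"] True X_pos c_pos by (simp add: X_def c_def)
      also have "\<dots> = X / 2" using X_pos c_pos q by (simp add: powr_powr)
      finally show False using X_pos by simp
    qed
    then show ?thesis using True q by (simp add: X_def)
  qed
qed

lemma has_integral_affine_unit_interval:
  fixes g :: "real \<Rightarrow> real"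
  assumes g_int: "(g has_integral I) {min e m..max e m}" and em: "e \<noteq> m"
  shows "((\<lambda>s. g (e + s * (m - e))) has_integral I / \<bar>m - e\<bar>) {0..1}"
proof -
  have "((\<lambda>x. g ((m - e) *\<^sub>R x + e)) has_integral (1 / \<bar>m - e\<bar> ^ DIM(real)) *\<^sub>R I)
      ((\<lambda>x. (1 / (m - e)) *\<^sub>R x + - ((1 / (m - e)) *\<^sub>R e)) ` cbox (min e m) (max e m))"
    using g_int em by (intro has_integral_affinity) auto
  moreover have "(\<lambda>x. x / (m - e) - e / (m - e)) ` {min e m..max e m} = {0..1}"
    using em unfolding image_affinity_atLeastAtMost_div_diff
    by (cases "e < m") (auto simp: min_def max_def diff_divide_distrib[symmetric])
  ultimately show ?thesis by (simp add: algebra_simps divide_inverse_commute)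
qed

lemma absolutely_integrable_continuous_mult_real:
  fixes w g :: "real \<Rightarrow> real"
  assumes w_cont: "continuous_on {c..d} w" and g_int: "g absolutely_integrable_on {c..d}"
  shows "(\<lambda>x. w x * g x) absolutely_integrable_on {c..d}"
proof (rule absolutely_integrable_bounded_measurable_product_real[OF _ _ _ g_int])
  show "w \<in> borel_measurable (lebesgue_on {c..d})"
    by (rule continuous_imp_measurable_on_sets_lebesgue[OF w_cont]) auto
  show "bounded (w ` {c..d})"
    by (intro compact_imp_bounded compact_continuous_image w_cont compact_Icc)
qed auto

lemma trapezoid_error_has_integral:
  fixes f f' f'' :: "real \<Rightarrow> real"
  assumes ab: "a \<le> b"
    and f': "\<And>x. x \<in> {a..b} \<Longrightarrow> (f has_real_derivative f' x) (at x)"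
    and f'': "\<And>x. x \<in> {a..b} \<Longrightarrow> (f' has_real_derivative f'' x) (at x)"
  shows "((\<lambda>x. (x - a) * (b - x) * f'' x) has_integral
           (b - a) * (f a + f b) - 2 * integral {a..b} f) {a..b}"
proof -
  \<comment> \<open>obtained by integrating \<open>(x - a) (b - x) f'' x\<close> by parts twice\<close>
  define P where "P = (\<lambda>x. (x - a) * (b - x) * f' x - (a + b - 2*x) * f x)"
  have P_deriv: "(P has_vector_derivative (x - a) * (b - x) * f'' x + 2 * f x) (at x within {a..b})"
    if x: "x \<in> {a..b}" for x
  proof -
    have "(P has_real_derivative (x - a) * (b - x) * f'' x + 2 * f x) (at x)"
      unfolding P_def by (auto intro!: derivative_eq_intros f'[OF x] f''[OF x] simp: algebra_simps)
    then show ?thesis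
      by (simp add: has_real_derivative_iff_has_vector_derivative[symmetric] has_field_derivative_at_within)
  qed
  have "continuous_on {a..b} f"
    using f' by (meson DERIV_isCont continuous_at_imp_continuous_on)
  then have f_int: "f integrable_on {a..b}" by (rule integrable_continuous_interval)
  have "((\<lambda>x. ((x - a) * (b - x) * f'' x + 2 * f x) - 2 * f x) has_integral
          (P b - P a) - 2 * integral {a..b} f) {a..b}"
    by (intro has_integral_diff fundamental_theorem_of_calculus ab P_deriv
        has_integral_mult_right integrable_integral f_int)
  moreover have "P b - P a = (b - a) * (f a + f b)" by (simp add: P_def algebra_simps)
  ultimately show ?thesis by simp
qed

lemma h_weighted_bound_has_integral:
  fixes h :: "real \<Rightarrow> real" and E M :: real
  assumes h_int: "h absolutely_integrable_on {0..1}"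
  shows "((\<lambda>s. s * (2 - s) * (h s * M + h (1 - s) * E)) has_integral
    integral {0..1} (\<lambda>t. ((1 - t^2) * E + t * (2 - t) * M) * h t)) {0..1}"
proof -
  define I1 where "I1 = integral {0..1} (\<lambda>t. t * (2 - t) * h t)"
  define I2 where "I2 = integral {0..1} (\<lambda>t. (1 - t^2) * h t)"
  have h1_int: "(\<lambda>t. t * (2 - t) * h t) integrable_on {0..1}"
    and h2_int: "(\<lambda>t. (1 - t^2) * h t) integrable_on {0..1}"
    by (auto intro!: absolutely_integrable_continuous_mult_real continuous_intros h_int
        intro: set_lebesgue_integral_eq_integral(1))
  \<comment> \<open>the substitution \<open>t = 1 - s\<close> turns \<open>s (2 - s) h (1 - s)\<close> into \<open>(1 - t^2) h t\<close>\<close>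
  have "((\<lambda>s. (1 - (1 + s * (0 - 1))^2) * h (1 + s * (0 - 1))) has_integral I2 / \<bar>0 - 1\<bar>) {0..1}"
    using has_integral_affine_unit_interval[of _ I2 1 0] integrable_integral[OF h2_int]
    by (simp add: I2_def)
  then have "((\<lambda>s. s * (2 - s) * h (1 - s)) has_integral I2) {0..1}"
    by (simp add: algebra_simps power2_eq_square)
  then have "((\<lambda>s. M * (s * (2 - s) * h s) + E * (s * (2 - s) * h (1 - s))) has_integral M * I1 + E * I2) {0..1}"
    unfolding I1_def by (intro has_integral_add has_integral_mult_right integrable_integral h1_int)
  moreover have "((\<lambda>t. E * ((1 - t^2) * h t) + M * (t * (2 - t) * h t)) has_integral E * I2 + M * I1) {0..1}"
    unfolding I1_def I2_def by (intro has_integral_add has_integral_mult_right integrable_integral h1_int h2_int)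
  ultimately show ?thesis
    by (simp add: integral_unique algebra_simps)
qed

lemma endpoint_midpoint_kernel_integral_le:
  fixes h G :: "real \<Rightarrow> real" and e m q :: real
  assumes q: "1 \<le> q" and em: "e \<noteq> m"
    and h_int: "h absolutely_integrable_on {0..1}"
    and G_nonneg: "\<And>x. 0 \<le> G x"
    and G_int: "(\<lambda>x. (x - e) * (2*m - e - x) * G x) integrable_on {min e m..max e m}"
    and conv: "\<And>s. s \<in> {0<..<1} \<Longrightarrow>
      G (s * m + (1 - s) * e) powr q \<le> h s * G m powr q + h (1 - s) * G e powr q"
  shows "integral {min e m..max e m} (\<lambda>x. (x - e) * (2*m - e - x) * G x)
    \<le> \<bar>m - e\<bar>^3 * (2/3) powr (1 - 1/q) *
      (integral {0..1} (\<lambda>t. ((1 - t^2) * G e powr q + t * (2 - t) * G m powr q) * h t)) powr (1/q)"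
proof -
  define d where "d = m - e"
  define X where "X = integral {min e m..max e m} (\<lambda>x. (x - e) * (2*m - e - x) * G x)"
  define J where "J = integral {0..1} (\<lambda>t. ((1 - t^2) * G e powr q + t * (2 - t) * G m powr q) * h t)"
  define w where "w = (\<lambda>s::real. s * (2 - s))"
  define g where "g = (\<lambda>s. G (e + s * d))"
  have d_nz: "d \<noteq> 0" using em by (simp add: d_def)
  have "((\<lambda>s. (e + s * d - e) * (2*m - e - (e + s * d)) * G (e + s * d)) has_integral X / \<bar>d\<bar>) {0..1}"
    using has_integral_affine_unit_interval[OF integrable_integral[OF G_int] em] by (simp add: X_def d_def)
  then have "((\<lambda>s. (1 / d^2) * (d^2 * (w s * g s))) has_integral (1 / d^2) * (X / \<bar>d\<bar>)) {0..1}"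
    by (intro has_integral_mult_right) (simp add: w_def g_def d_def algebra_simps power2_eq_square)
  then have wg_int: "((\<lambda>s. w s * g s) has_integral X / \<bar>d\<bar>^3) {0<..<1}"
    using d_nz by (simp add: has_integral_Icc_iff_Ioo power3_eq_cube power2_eq_square abs_mult_self_eq)
  have w_int: "(w has_integral 2/3) {0<..<1}"
  proof -
    have "((\<lambda>s. s^2 - s^3/3) has_vector_derivative w s) (at s within {0..1})" for s
      unfolding w_def has_real_derivative_iff_has_vector_derivative[symmetric]
      by (auto intro!: derivative_eq_intros simp: algebra_simps power2_eq_square)
    from fundamental_theorem_of_calculus[OF _ this] show ?thesis
      by (simp add: has_integral_Icc_iff_Ioo)
  qed
  define B where "B = (\<lambda>s. w s * (h s * G m powr q + h (1 - s) * G e powr q))"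
  have B_int: "(B has_integral J) {0<..<1}"
    using h_weighted_bound_has_integral[OF h_int]
    by (simp add: B_def w_def J_def has_integral_Icc_iff_Ioo[symmetric])
  have bound: "\<forall>s\<in>{0<..<1}. w s * g s powr q \<le> B s"
  proof
    fix s :: real assume s: "s \<in> {0<..<1}"
    have "g s powr q \<le> h s * G m powr q + h (1 - s) * G e powr q"
      using conv[OF s] by (simp add: g_def d_def algebra_simps)
    moreover have "0 \<le> w s" using s by (simp add: w_def)
    ultimately show "w s * g s powr q \<le> B s" by (simp add: B_def mult_left_mono)
  qed
  have "X / \<bar>d\<bar>^3 \<le> (2/3) powr (1 - 1/q) * J powr (1/q)"
    using weighted_power_mean_integral_le[OF q _ _ has_integral_integrable[OF wg_int] w_int _ B_int bound]
      integral_unique[OF wg_int] G_nonneg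
    by (auto simp: w_def g_def)
  then show ?thesis
    using d_nz by (simp add: X_def J_def d_def divide_le_eq mult.commute mult.left_commute)
qed

lemma h_convex_kernel_integral_le:
  fixes h g :: "real \<Rightarrow> real" and a b q :: real
  assumes q: "1 \<le> q" and ab: "a < b"
    and h_int: "h absolutely_integrable_on {0..1}"
    and g_int: "g absolutely_integrable_on {a..b}"
    and hconv: "h_convex h {a..b} (\<lambda>x. \<bar>g x\<bar> powr q)"
  shows "\<bar>integral {a..b} (\<lambda>x. (x - a) * (b - x) * g x)\<bar>
    \<le> (b - a)^3 / 8 * (2/3) powr (1 - 1/q) *
      (integral {0..1} (\<lambda>t. ((1 - t^2) * \<bar>g a\<bar> powr q + t * (2 - t) * \<bar>g ((a + b) / 2)\<bar> powr q) * h t) powr (1/q)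
     + integral {0..1} (\<lambda>t. ((1 - t^2) * \<bar>g b\<bar> powr q + t * (2 - t) * \<bar>g ((a + b) / 2)\<bar> powr q) * h t) powr (1/q))"
proof -
  define c where "c = (a + b) / 2"
  define G where "G = (\<lambda>x. \<bar>g x\<bar>)"
  define J where "J = (\<lambda>e. integral {0..1} (\<lambda>t. ((1 - t^2) * G e powr q + t * (2 - t) * G c powr q) * h t))"
  have ac: "a < c" and cb: "c < b" using ab by (auto simp: c_def)
  have Kg_int: "(\<lambda>x. (x - a) * (b - x) * g x) integrable_on {a..b}"
    and KG_int: "(\<lambda>x. (x - a) * (b - x) * G x) integrable_on {a..b}"
    using g_int by (auto simp: G_def absolutely_integrable_on_def
        intro!: set_lebesgue_integral_eq_integral(1) absolutely_integrable_continuous_mult_real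
        continuous_intros)
  have half: "integral {min e c..max e c} (\<lambda>x. (x - a) * (b - x) * G x)
      \<le> ((b - a) / 2)^3 * (2/3) powr (1 - 1/q) * J e powr (1/q)" if e: "e = a \<or> e = b" for e
  proof -
    have c_in: "c \<in> {a..b}" and e_in: "e \<in> {a..b}" and e_ne: "e \<noteq> c"
      and dist: "\<bar>c - e\<bar> = (b - a) / 2"
      using e ac cb by (auto simp: c_def)
    have kernel: "(\<lambda>x. (x - e) * (2*c - e - x) * G x) = (\<lambda>x. (x - a) * (b - x) * G x)"
      using e by (auto simp: c_def field_simps)
    have "{min e c..max e c} \<subseteq> {a..b}" using e_in c_in by auto
    then have "(\<lambda>x. (x - a) * (b - x) * G x) integrable_on {min e c..max e c}"
      by (rule integrable_on_subinterval[OF KG_int])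
    moreover have "G (s * c + (1 - s) * e) powr q \<le> h s * G c powr q + h (1 - s) * G e powr q"
      if "s \<in> {0<..<1}" for s
      using hconv c_in e_in that unfolding h_convex_def G_def by blast
    ultimately show ?thesis
      using endpoint_midpoint_kernel_integral_le[OF q e_ne h_int, of G] dist
      unfolding kernel J_def by (simp add: G_def)
  qed
  have "\<bar>integral {a..b} (\<lambda>x. (x - a) * (b - x) * g x)\<bar> \<le> integral {a..b} (\<lambda>x. (x - a) * (b - x) * G x)"
    using integral_norm_bound_integral[OF Kg_int KG_int] by (simp add: G_def abs_mult)
  also have "\<dots> = integral {a..c} (\<lambda>x. (x - a) * (b - x) * G x) + integral {c..b} (\<lambda>x. (x - a) * (b - x) * G x)"
    using Henstock_Kurzweil_Integration.integral_combine[OF less_imp_le[OF ac] less_imp_le[OF cb] KG_int] ..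
  also have "\<dots> \<le> ((b - a) / 2)^3 * (2/3) powr (1 - 1/q) * J a powr (1/q)
      + ((b - a) / 2)^3 * (2/3) powr (1 - 1/q) * J b powr (1/q)"
    using half[of a] half[of b] ac cb by (simp add: min_def max_def add_mono)
  also have "\<dots> = (b - a)^3 / 8 * (2/3) powr (1 - 1/q) * (J a powr (1/q) + J b powr (1/q))"
    by (simp add: power_divide algebra_simps)
  finally show ?thesis by (simp add: J_def G_def c_def)
qed

theorem theorem8:
  fixes J I :: "real set" and h f f' f'' :: "real \<Rightarrow> real" and a b q :: real
  assumes J_int: "is_interval J" and J01: "{0<..<1} \<subseteq> J"
    and h_nonneg: "\<forall>t\<in>J. 0 \<le> h t" and h_nz: "\<exists>t\<in>J. h t \<noteq> 0"
    and h_int: "h absolutely_integrable_on {0<..<1}"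
    and I_int: "is_interval I" and I_nonneg: "I \<subseteq> {0..}"
    and a_in: "a \<in> interior I" and b_in: "b \<in> interior I" and ab: "a < b"
    and f1: "\<forall>x\<in>interior I. (f has_real_derivative f' x) (at x)"
    and f2: "\<forall>x\<in>interior I. (f' has_real_derivative f'' x) (at x)"
    and f''_L1: "f'' absolutely_integrable_on {a..b}"
    and q: "1 \<le> q"
    and hconv: "h_convex h {a..b} (\<lambda>x. \<bar>f'' x\<bar> powr q)"
  shows "\<bar>(f a + f b) / 2 - (1 / (b - a)) * integral {a..b} f\<bar>
    \<le> (b - a)^2 / 16 * (2/3) powr (1 - 1/q) *
      ( (integral {0..1} (\<lambda>t. ((1 - t^2) * \<bar>f'' a\<bar> powr q
            + t * (2 - t) * \<bar>f'' ((a + b) / 2)\<bar> powr q) * h t)) powr (1/q)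
      + (integral {0..1} (\<lambda>t. ((1 - t^2) * \<bar>f'' b\<bar> powr q
            + t * (2 - t) * \<bar>f'' ((a + b) / 2)\<bar> powr q) * h t)) powr (1/q))"
proof -
  have ab_sub: "{a..b} \<subseteq> interior I"
  proof -
    have "is_interval (interior I)" using I_int by (simp add: is_interval_convex_1)
    then show ?thesis using mem_is_interval_1_I[of "interior I" a b] a_in b_in by auto
  qed
  have trapezoid: "((\<lambda>x. (x - a) * (b - x) * f'' x) has_integral
      (b - a) * (f a + f b) - 2 * integral {a..b} f) {a..b}"
    using ab ab_sub f1 f2 by (intro trapezoid_error_has_integral) auto
  have error_eq: "(f a + f b) / 2 - (1 / (b - a)) * integral {a..b} f
      = integral {a..b} (\<lambda>x. (x - a) * (b - x) * f'' x) / (2 * (b - a))"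
    using integral_unique[OF trapezoid] ab by (simp add: field_simps)
  have "h absolutely_integrable_on {0..1}"
    using h_int by (simp add: absolutely_integrable_on_def integrable_on_open_interval_real)
  note kernel_bound = h_convex_kernel_integral_le[OF q ab this f''_L1 hconv]
  have "\<bar>X / (2 * (b - a))\<bar> \<le> (b - a)^2 / 16 * P * Q"
    if "\<bar>X\<bar> \<le> (b - a)^3 / 8 * P * Q" for X P Q :: real
  proof -
    have "(b - a)^2 / 16 * P * Q * (2 * (b - a)) = (b - a)^3 / 8 * P * Q"
      by (simp add: power2_eq_square power3_eq_cube)
    with that have "\<bar>X\<bar> \<le> (b - a)^2 / 16 * P * Q * (2 * (b - a))" by (simp only:)
    then show ?thesis using ab by (simp add: abs_divide pos_divide_le_eq)
  qed
  from this[OF kernel_bound] show ?thesis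
    unfolding error_eq .
qed

end
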